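(* Let $\Lambda$ be any lattice in $\mathbb{E}^3$ whose shortest non-zero lattice vector has length $2$. Then for every integer $n\ge 2$, $$C_{\Lambda}(n) < 6n-\frac{3\sqrt[3]{18\pi}}{\pi}\,n^{2/3} = 6n-3.665\ldots\, n^{2/3}.$$
   Context: A lattice in $\mathbb{E}^3$ is the set of integer linear combinations of three fixed linearly independent vectors. A packing of unit balls is a family of closed unit balls with pairwise disjoint interiors; its contact number is the number of unordered pairs of balls that touch (centers at distance exactly $2$). $C_\Lambda(n)$ denotes the largest contact number among all packings of $n$ unit balls in $\mathbb{E}^3$ all of whose centers are points of $\Lambda$. *)

theory Defs
  imports "HOL-Analysis.Analysis"
begin

definition lattice3 :: "(real^3) set \<Rightarrow> bool" where
  "lattice3 L \<longleftrightarrow> (\<exists>b1 b2 b3. card {b1, b2, b3} = 3 \<and> independent {b1, b2, b3} \<and>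
      L = {of_int i *\<^sub>R b1 + of_int j *\<^sub>R b2 + of_int k *\<^sub>R b3 | i j k. True})"

text \<open>A packing of closed unit balls, given by the (distinct) centers: interiors pairwise
  disjoint iff centers are at distance at least 2.\<close>
definition unit_ball_packing :: "(real^3) set \<Rightarrow> bool" where
  "unit_ball_packing P \<longleftrightarrow> finite P \<and> (\<forall>x\<in>P. \<forall>y\<in>P. x \<noteq> y \<longrightarrow> dist x y \<ge> 2)"

definition contact_number :: "(real^3) set \<Rightarrow> nat" where
  "contact_number P = card {{x, y} | x y. x \<in> P \<and> y \<in> P \<and> dist x y = 2}"

definition lattice_contact_max :: "(real^3) set \<Rightarrow> nat \<Rightarrow> nat" where
  "lattice_contact_max L n =
     Max {contact_number P | P. P \<subseteq> L \<and> unit_ball_packing P \<and> card P = n}"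

end

theory Submission
  imports Defs
begin

(* Let L be a lattice with minimum norm 2 and P a packing of n points of L.  Every contact
   {x, y} of P has y - x a minimal vector of L.
   (1) Minimal vectors modulo 2L: two minimal vectors in the same class of L/2L = F_2^3 agree
       up to sign, and not all seven non-zero classes contain minimal vectors.  So the
       minimal vectors come in k <= 6 pairs +-s, and with a set R of representatives
         contact_number P = sum over s in R of (n - ends P s),
       where ends P s counts the points x of P with x + s not in P.
   (2) Discrete Loomis-Whitney: for linearly independent s1, s2, s3 we have
       n^2 <= ends P s1 * ends P s2 * ends P s3, hence by AM-GM the three ends sum to at
       least 3 n^(2/3).
   (3) Minimal vectors whose classes form a basis of F_2^3 are linearly independent; any four
       non-zero classes contain such a basis and any six contain two disjoint ones.
   Hence the contact number is at most 3n (k <= 3), 5n - 3n^(2/3) (k = 4, 5) or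
   6n - 6n^(2/3) (k = 6), each below 6n - alpha n^(2/3) since alpha^3 = 486/pi^2 < 54.
   The file develops 3x3 determinants, the Loomis-Whitney inequality, contact counting,
   the combinatorics of F_2^3 and the lattice facts in this order, and ends with theorem1. *)

(* Cramer's rule gives coordinates
   with respect to any basis, which is what we need both for lattice coordinates and for
   the Loomis-Whitney inequality. *)

definition det3 :: "real^3 \<Rightarrow> real^3 \<Rightarrow> real^3 \<Rightarrow> real" where
  "det3 a b c = a$1 * (b$2 * c$3 - b$3 * c$2) - a$2 * (b$1 * c$3 - b$3 * c$1)
               + a$3 * (b$1 * c$2 - b$2 * c$1)"

lemma det3_cramer:
  "det3 a b c *\<^sub>R x = det3 x b c *\<^sub>R a + det3 a x c *\<^sub>R b + det3 a b x *\<^sub>R c"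
  unfolding det3_def vec_eq_iff forall_3 by (simp add: algebra_simps)

lemma det3_linear:
  "det3 (x + y) b c = det3 x b c + det3 y b c"
  "det3 a (x + y) c = det3 a x c + det3 a y c"
  "det3 a b (x + y) = det3 a b x + det3 a b y"
  "det3 (r *\<^sub>R x) b c = r * det3 x b c"
  "det3 a (r *\<^sub>R x) c = r * det3 a x c"
  "det3 a b (r *\<^sub>R x) = r * det3 a b x"
  unfolding det3_def by (simp_all add: algebra_simps)

lemma det3_alternating:
  "det3 a a c = 0" "det3 a b a = 0" "det3 a b b = 0"
  "det3 a c b = - det3 a b c" "det3 b a c = - det3 a b c" "det3 c b a = - det3 a b c"
  "det3 b c a = det3 a b c" "det3 c a b = det3 a b c"
  unfolding det3_def by (simp_all add: algebra_simps)

lemma det3_nonzero_if_independent: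
  assumes "independent {a, b, c :: real^3}" "card {a, b, c} = 3"
  shows "det3 a b c \<noteq> 0"
proof -
  let ?A = "vector [a, b, c] :: real^3^3"
  have "range (\<lambda>i. ?A$i) = {a, b, c}"
  proof (intro set_eqI iffI)
    fix x assume "x \<in> range (\<lambda>i. ?A$i)"
    then obtain i where "x = ?A$i" by auto
    then show "x \<in> {a, b, c}" using exhaust_3[of i] by auto
  next
    fix x assume "x \<in> {a, b, c}"
    then show "x \<in> range (\<lambda>i. ?A$i)"
      using rangeI[of "\<lambda>i. ?A$i" 1] rangeI[of "\<lambda>i. ?A$i" 2] rangeI[of "\<lambda>i. ?A$i" 3] by auto
  qed
  moreover have "rows ?A = range (\<lambda>i. ?A$i)" by (auto simp: rows_def row_def vec_lambda_eta)
  ultimately have "rows ?A = {a, b, c}" by simp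
  then have "rank ?A = 3"
    unfolding row_rank_def using dim_eq_card_independent[OF assms(1)] assms(2) by simp
  then have "det ?A \<noteq> 0" using det_eq_0_rank[of ?A] by simp
  then show ?thesis unfolding det_3 det3_def by (simp add: algebra_simps)
qed

(* The discrete Loomis-Whitney inequality bounds a finite set by its three coordinate
   projections; for a set of lattice points the projection along s is bounded by the number
   of points x with x + s outside the set. *)

lemma card_pairs_by_fibres:
  assumes "finite P"
  shows "card ((\<lambda>x. (g x, h x)) ` P) = (\<Sum>c\<in>h ` P. card (g ` {x\<in>P. h x = c}))"
proof -
  have "(\<lambda>x. (g x, h x)) ` P = (\<Union>c\<in>h ` P. (\<lambda>a. (a, c)) ` g ` {x\<in>P. h x = c})"
    by auto
  also have "card \<dots> = (\<Sum>c\<in>h ` P. card ((\<lambda>a. (a, c)) ` g ` {x\<in>P. h x = c}))"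
    by (rule card_UN_disjoint) (use assms in auto)
  also have "\<dots> = (\<Sum>c\<in>h ` P. card (g ` {x\<in>P. h x = c}))"
    by (intro sum.cong refl card_image) (auto simp: inj_on_def)
  finally show ?thesis .
qed

text \<open>Split \<open>P\<close> into the fibres of \<open>f3\<close>; each fibre is bounded both by \<open>|P\<^sub>1\<^sub>2|\<close> and by the
  product of its own projections, and Cauchy-Schwarz sums the geometric means.\<close>
theorem discrete_loomis_whitney:
  assumes fin: "finite P" and inj: "inj_on (\<lambda>x. (f1 x, f2 x, f3 x)) P"
  shows "real (card P)^2 \<le> real (card ((\<lambda>x. (f2 x, f3 x)) ` P))
           * real (card ((\<lambda>x. (f1 x, f3 x)) ` P)) * real (card ((\<lambda>x. (f1 x, f2 x)) ` P))"
proof -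
  define S where "S c = {x\<in>P. f3 x = c}" for c
  define N1 where "N1 = card ((\<lambda>x. (f2 x, f3 x)) ` P)"
  define N2 where "N2 = card ((\<lambda>x. (f1 x, f3 x)) ` P)"
  define N3 where "N3 = card ((\<lambda>x. (f1 x, f2 x)) ` P)"
  have inj12: "inj_on (\<lambda>x. (f1 x, f2 x)) (S c)" for c
    using inj unfolding S_def inj_on_def by auto
  have finS: "finite (S c)" for c unfolding S_def using fin by simp
  have cP: "card P = (\<Sum>c\<in>f3 ` P. card (S c))"
    using card_pairs_by_fibres[OF fin, of "\<lambda>x. x" f3] card_image[of "\<lambda>x. (x, f3 x)" P]
    unfolding S_def by (simp add: inj_on_def)
  have N1: "N1 = (\<Sum>c\<in>f3 ` P. card (f2 ` S c))"
    unfolding N1_def S_def by (rule card_pairs_by_fibres[OF fin])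
  have N2: "N2 = (\<Sum>c\<in>f3 ` P. card (f1 ` S c))"
    unfolding N2_def S_def by (rule card_pairs_by_fibres[OF fin])
  have fibre: "real (card (S c)) \<le> sqrt (real N3) * (sqrt (card (f1 ` S c)) * sqrt (card (f2 ` S c)))"
    for c
  proof -
    have image12: "card (S c) = card ((\<lambda>x. (f1 x, f2 x)) ` S c)"
      by (rule card_image[OF inj12, symmetric])
    also have "\<dots> \<le> card (f1 ` S c \<times> f2 ` S c)" by (rule card_mono) (auto simp: finS)
    finally have "card (S c) \<le> card (f1 ` S c) * card (f2 ` S c)" by (simp add: card_cartesian_product)
    moreover have "card (S c) \<le> N3"
      unfolding image12 N3_def by (rule card_mono) (auto simp: fin S_def)
    ultimately have "real (card (S c)) * real (card (S c))
                     \<le> real N3 * (real (card (f1 ` S c)) * real (card (f2 ` S c)))"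
      by (intro mult_mono) (simp_all flip: of_nat_mult)
    then have "real (card (S c)) \<le> sqrt (real N3 * (real (card (f1 ` S c)) * real (card (f2 ` S c))))"
      by (intro real_le_rsqrt) (simp add: power2_eq_square)
    then show ?thesis by (simp add: real_sqrt_mult)
  qed
  have cauchy_schwarz:
    "(\<Sum>c\<in>f3 ` P. sqrt (card (f1 ` S c)) * sqrt (card (f2 ` S c))) \<le> sqrt (real N2) * sqrt (real N1)"
  proof -
    have "(\<Sum>c\<in>f3 ` P. sqrt (card (f1 ` S c)) * sqrt (card (f2 ` S c)))^2
          \<le> (\<Sum>c\<in>f3 ` P. (sqrt (card (f1 ` S c)))^2) * (\<Sum>c\<in>f3 ` P. (sqrt (card (f2 ` S c)))^2)"
      by (rule Cauchy_Schwarz_ineq_sum)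
    also have "\<dots> = real N2 * real N1" unfolding N1 N2 by simp
    finally show ?thesis by (simp add: real_le_rsqrt flip: real_sqrt_mult)
  qed
  have "real (card P) \<le> (\<Sum>c\<in>f3 ` P. sqrt (real N3) * (sqrt (card (f1 ` S c)) * sqrt (card (f2 ` S c))))"
    unfolding cP of_nat_sum by (rule sum_mono) (rule fibre)
  also have "\<dots> \<le> sqrt (real N3) * (sqrt (real N2) * sqrt (real N1))"
    unfolding sum_distrib_left[symmetric] by (rule mult_left_mono[OF cauchy_schwarz]) simp
  also have "\<dots> = sqrt (real N1 * real N2 * real N3)"
    by (simp add: real_sqrt_mult mult_ac)
  finally have "(real (card P))^2 \<le> (sqrt (real N1 * real N2 * real N3))^2"
    by (rule power_mono) simp
  then show ?thesis unfolding N1_def N2_def N3_def by simp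
qed

text \<open>If \<open>g\<close> increases by one and \<open>h\<close> is invariant under translation by \<open>s\<close>, then every level
  set of \<open>h\<close> on \<open>P\<close> contains a point \<open>x\<close> (maximising \<open>g\<close>) with \<open>x + s \<notin> P\<close>: the number of
  lines in direction \<open>s\<close> meeting \<open>P\<close> is at most the number of their ends.\<close>
lemma card_projection_le_ends:
  fixes P :: "'v::ab_group_add set" and g :: "'v \<Rightarrow> real"
  assumes fin: "finite P" and g: "\<And>x. g (x + s) = g x + 1" and h: "\<And>x. h (x + s) = h x"
  shows "card (h ` P) \<le> card {x\<in>P. x + s \<notin> P}"
proof -
  let ?E = "{x\<in>P. x + s \<notin> P}"
  have "h ` P \<subseteq> h ` ?E"
  proof
    fix u assume "u \<in> h ` P"
    then obtain x where x: "x \<in> P" "u = h x" by auto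
    let ?S = "{y\<in>P. h y = h x}"
    have "Max (g ` ?S) \<in> g ` ?S" using fin x by (intro Max_in) auto
    then obtain y where y: "y \<in> ?S" "g y = Max (g ` ?S)" by auto
    have "y + s \<notin> P"
    proof
      assume "y + s \<in> P"
      then have "g (y + s) \<le> Max (g ` ?S)" using y h fin by simp
      then show False using y g by simp
    qed
    with y have "y \<in> ?E" by simp
    then have "h y \<in> h ` ?E" by (rule imageI)
    then show "u \<in> h ` ?E" using x y by simp
  qed
  then have "card (h ` P) \<le> card (h ` ?E)" by (rule card_mono[rotated]) (use fin in simp)
  also have "\<dots> \<le> card ?E" by (rule card_image_le) (use fin in simp)
  finally show ?thesis .
qed

definition ends :: "'v::ab_group_add set \<Rightarrow> 'v \<Rightarrow> nat" where
  "ends P s = card {x\<in>P. x + s \<notin> P}"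

lemma card_shift_in_plus_ends:
  assumes "finite P"
  shows "card {x\<in>P. x + s \<in> P} + ends P s = card P"
proof -
  have "card {x\<in>P. x + s \<in> P} + card {x\<in>P. x + s \<notin> P}
        = card ({x\<in>P. x + s \<in> P} \<union> {x\<in>P. x + s \<notin> P})"
    by (rule card_Un_disjoint[symmetric]) (use assms in auto)
  also have "{x\<in>P. x + s \<in> P} \<union> {x\<in>P. x + s \<notin> P} = P" by auto
  finally show ?thesis unfolding ends_def .
qed

text \<open>Loomis-Whitney in terms of ends: use the coordinates with respect to the basis
  \<open>s1, s2, s3\<close> (Cramer's rule); translation by \<open>s\<^sub>i\<close> moves only the \<open>i\<close>-th coordinate.\<close>
lemma ends_loomis_whitney:
  fixes P :: "(real^3) set"
  assumes fin: "finite P" and D: "det3 s1 s2 s3 \<noteq> 0"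
  shows "real (card P)^2 \<le> real (ends P s1) * real (ends P s2) * real (ends P s3)"
proof -
  define f1 where "f1 x = det3 x s2 s3 / det3 s1 s2 s3" for x
  define f2 where "f2 x = det3 s1 x s3 / det3 s1 s2 s3" for x
  define f3 where "f3 x = det3 s1 s2 x / det3 s1 s2 s3" for x
  have inj: "inj_on (\<lambda>x. (f1 x, f2 x, f3 x)) P"
  proof (rule inj_onI)
    fix x y assume "(f1 x, f2 x, f3 x) = (f1 y, f2 y, f3 y)"
    then have "det3 s1 s2 s3 *\<^sub>R x = det3 s1 s2 s3 *\<^sub>R y"
      unfolding det3_cramer[of s1 s2 s3 x] det3_cramer[of s1 s2 s3 y] f1_def f2_def f3_def
      using D by simp
    then show "x = y" using D by simp
  qed
  have shift: "f1 (x + s1) = f1 x + 1" "f2 (x + s1) = f2 x" "f3 (x + s1) = f3 x"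
    "f1 (x + s2) = f1 x" "f2 (x + s2) = f2 x + 1" "f3 (x + s2) = f3 x"
    "f1 (x + s3) = f1 x" "f2 (x + s3) = f2 x" "f3 (x + s3) = f3 x + 1" for x
    unfolding f1_def f2_def f3_def using D
    by (simp_all add: det3_linear det3_alternating(1-3) add_divide_distrib)
  have "card ((\<lambda>x. (f2 x, f3 x)) ` P) \<le> ends P s1"
    unfolding ends_def by (rule card_projection_le_ends[OF fin, where g = f1]) (simp_all add: shift)
  moreover have "card ((\<lambda>x. (f1 x, f3 x)) ` P) \<le> ends P s2"
    unfolding ends_def by (rule card_projection_le_ends[OF fin, where g = f2]) (simp_all add: shift)
  moreover have "card ((\<lambda>x. (f1 x, f2 x)) ` P) \<le> ends P s3"
    unfolding ends_def by (rule card_projection_le_ends[OF fin, where g = f3]) (simp_all add: shift)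
  ultimately have "real (card ((\<lambda>x. (f2 x, f3 x)) ` P)) * real (card ((\<lambda>x. (f1 x, f3 x)) ` P))
      * real (card ((\<lambda>x. (f1 x, f2 x)) ` P)) \<le> real (ends P s1) * real (ends P s2) * real (ends P s3)"
    by (intro mult_mono) simp_all
  then show ?thesis using discrete_loomis_whitney[OF fin inj] by linarith
qed

lemma amgm3:
  fixes a b c :: real
  assumes "a \<ge> 0" "b \<ge> 0" "c \<ge> 0"
  shows "27 * (a * b * c) \<le> (a + b + c)^3"
proof -
  have "2 * ((a + b + c)^3 - 27 * (a * b * c))
        = (a + b + c) * ((a - b)^2 + (b - c)^2 + (c - a)^2)
          + 6 * (a * (b - c)^2 + b * (c - a)^2 + c * (a - b)^2)"
    by (simp add: power2_eq_square power3_eq_cube algebra_simps)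
  also have "\<dots> \<ge> 0" using assms by simp
  finally show ?thesis by simp
qed

lemma powr_cube: "(x::real) > 0 \<Longrightarrow> (x powr a)^3 = x powr (3 * a)"
  by (simp add: powr_realpow[symmetric] powr_powr mult.commute)

lemma sum_ge_of_square_le_product:
  fixes a b c n :: real
  assumes "a \<ge> 0" "b \<ge> 0" "c \<ge> 0" "n > 0" "n^2 \<le> a * b * c"
  shows "3 * n powr (2/3) \<le> a + b + c"
proof (rule ccontr)
  assume "\<not> ?thesis"
  then have "(a + b + c)^3 < (3 * n powr (2/3))^3"
    by (intro power_strict_mono) (use assms in simp_all)
  also have "\<dots> = 27 * n^2"
    using powr_cube[OF assms(4), of "2/3"] assms(4) by (simp add: power_mult_distrib powr_realpow)
  finally show False using amgm3[OF assms(1-3)] assms(5) by simp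
qed

lemma ends_sum_bound:
  fixes P :: "(real^3) set"
  assumes "finite P" "P \<noteq> {}" "det3 s1 s2 s3 \<noteq> 0"
  shows "3 * real (card P) powr (2/3) \<le> real (ends P s1) + real (ends P s2) + real (ends P s3)"
  by (rule sum_ge_of_square_le_product) (use ends_loomis_whitney[OF assms(1,3)] assms(1,2) in auto)

lemma contact_number_by_directions:
  fixes P R :: "(real^3) set"
  assumes finP: "finite P" and finR: "finite R"
    and cover: "\<And>x y. x \<in> P \<Longrightarrow> y \<in> P \<Longrightarrow> dist x y = 2 \<Longrightarrow> y - x \<in> R \<or> x - y \<in> R"
    and antipodal_free: "\<And>s. s \<in> R \<Longrightarrow> - s \<notin> R"
    and norm_R: "\<And>s. s \<in> R \<Longrightarrow> norm s = 2"
  shows "contact_number P = (\<Sum>s\<in>R. card {x\<in>P. x + s \<in> P})"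
proof -
  let ?E = "{{x, y} | x y. x \<in> P \<and> y \<in> P \<and> dist x y = 2}"
  let ?S = "SIGMA s:R. {x\<in>P. x + s \<in> P}"
  let ?g = "\<lambda>(s, x). {x, x + s}"
  have "inj_on ?g ?S"
  proof (rule inj_onI, clarify)
    fix s x t y assume st: "s \<in> R" "t \<in> R" and eq: "{x, x + s} = {y, y + t}"
    then have "(x = y \<and> x + s = y + t) \<or> (x = y + t \<and> x + s = y)" by (simp add: doubleton_eq_iff)
    moreover have "s + t \<noteq> 0" using antipodal_free[OF st(2)] st(1) by (metis eq_neg_iff_add_eq_0)
    ultimately show "s = t \<and> x = y"
      by (metis add.assoc add_cancel_left_right add_left_cancel)
  qed
  moreover have "?g ` ?S = ?E"
  proof (intro set_eqI iffI)
    fix e assume "e \<in> ?g ` ?S"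
    then obtain s x where sx: "s \<in> R" "x \<in> P" "x + s \<in> P" "e = {x, x + s}" by auto
    then have "dist x (x + s) = 2" using norm_R by (simp add: dist_norm)
    then show "e \<in> ?E" using sx by blast
  next
    fix e assume "e \<in> ?E"
    then obtain x y where xy: "x \<in> P" "y \<in> P" "dist x y = 2" "e = {x, y}" by auto
    from cover[OF xy(1-3)] show "e \<in> ?g ` ?S"
    proof
      assume "y - x \<in> R"
      then show ?thesis using xy by (intro rev_image_eqI[of "(y - x, x)"]) auto
    next
      assume "x - y \<in> R"
      then show ?thesis using xy by (intro rev_image_eqI[of "(x - y, y)"]) auto
    qed
  qed
  ultimately have "card ?S = card ?E" by (rule bij_betw_same_card[OF bij_betw_imageI])
  moreover have "card ?S = (\<Sum>s\<in>R. card {x\<in>P. x + s \<in> P})"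
    by (rule card_SigmaI) (use finR finP in auto)
  ultimately show ?thesis unfolding contact_number_def by simp
qed

type_synonym parity = "bool \<times> bool \<times> bool"

abbreviation pzero :: parity where "pzero \<equiv> (False, False, False)"

fun pxor :: "parity \<Rightarrow> parity \<Rightarrow> parity" where
  "pxor (a1, a2, a3) (b1, b2, b3) = (a1 \<noteq> b1, a2 \<noteq> b2, a3 \<noteq> b3)"

text \<open>The determinant over \<open>F\<^sub>2\<close>; it is the parity of the integer determinant.\<close>
fun bdet :: "parity \<Rightarrow> parity \<Rightarrow> parity \<Rightarrow> bool" where
  "bdet (a1, a2, a3) (b1, b2, b3) (c1, c2, c3) =
     (((a1 \<and> ((b2 \<and> c3) \<noteq> (b3 \<and> c2))) \<noteq> (a2 \<and> ((b1 \<and> c3) \<noteq> (b3 \<and> c1))))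
       \<noteq> (a3 \<and> ((b1 \<and> c2) \<noteq> (b2 \<and> c1))))"

lemma pxor_self [simp]: "pxor x x = pzero"
  by (cases x rule: prod_cases3) auto

lemma pxor_zero [simp]: "pxor x pzero = x"
  by (cases x rule: prod_cases3) auto

lemma pxor_ac:
  "pxor (pxor x y) z = pxor x (pxor y z)" "pxor x y = pxor y x" "pxor x (pxor y z) = pxor y (pxor x z)"
  by (cases x rule: prod_cases3; cases y rule: prod_cases3; cases z rule: prod_cases3; auto)+

lemma pxor_cancel [simp]: "pxor x (pxor x y) = y"
  by (metis pxor_ac(1) pxor_self pxor_ac(2) pxor_zero)

lemma card_parity: "card (UNIV :: parity set) = 8"
  by (simp add: UNIV_Times_UNIV[symmetric] card_cartesian_product del: UNIV_Times_UNIV)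

lemma bdet_if_not_in_span:
  assumes "x \<noteq> pzero" "y \<noteq> pzero" "x \<noteq> y" "z \<notin> {pzero, x, y, pxor x y}"
  shows "bdet x y z"
proof -
  have "\<forall>x y z :: parity. x \<noteq> pzero \<longrightarrow> y \<noteq> pzero \<longrightarrow> x \<noteq> y \<longrightarrow> z \<notin> {pzero, x, y, pxor x y}
          \<longrightarrow> bdet x y z"
    by (simp only: split_paired_All all_bool_eq) simp
  then show ?thesis using assms by blast
qed

lemma six_split_into_bases:
  assumes "p \<noteq> pzero" "a \<notin> {pzero, p}" "b \<notin> {pzero, p, a, pxor a p}"
  shows "distinct [a, pxor a p, b, pxor b p, pxor a b, pxor (pxor a b) p]"
    and "set [a, pxor a p, b, pxor b p, pxor a b, pxor (pxor a b) p] \<inter> {pzero, p} = {}"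
    and "bdet a (pxor a p) b" and "bdet (pxor b p) (pxor a b) (pxor (pxor a b) p)"
proof -
  have "\<forall>p a b :: parity. p \<noteq> pzero \<longrightarrow> a \<notin> {pzero, p} \<longrightarrow> b \<notin> {pzero, p, a, pxor a p} \<longrightarrow>
          distinct [a, pxor a p, b, pxor b p, pxor a b, pxor (pxor a b) p] \<and>
          set [a, pxor a p, b, pxor b p, pxor a b, pxor (pxor a b) p] \<inter> {pzero, p} = {} \<and>
          bdet a (pxor a p) b \<and> bdet (pxor b p) (pxor a b) (pxor (pxor a b) p)"
    by (simp only: split_paired_All all_bool_eq) simp
  then show "distinct [a, pxor a p, b, pxor b p, pxor a b, pxor (pxor a b) p]"
    "set [a, pxor a p, b, pxor b p, pxor a b, pxor (pxor a b) p] \<inter> {pzero, p} = {}"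
    "bdet a (pxor a p) b" "bdet (pxor b p) (pxor a b) (pxor (pxor a b) p)"
    using assms by blast+
qed

definition parity_basis :: "parity set \<Rightarrow> bool" where
  "parity_basis T \<longleftrightarrow> (\<exists>x y z. T = {x, y, z} \<and> distinct [x, y, z] \<and> bdet x y z)"

lemma exists_outside:
  assumes "finite A" "card A < card K" shows "\<exists>z\<in>K. z \<notin> A"
  using assms card_mono[OF assms(1)] by (meson leD subsetI)

lemma basis_in_four:
  assumes "pzero \<notin> K" "card K \<ge> 4"
  shows "\<exists>T\<subseteq>K. parity_basis T"
proof -
  obtain x where x: "x \<in> K" using exists_outside[of "{}" K] assms(2) by auto
  obtain y where y: "y \<in> K" "y \<notin> {x}" using exists_outside[of "{x}" K] assms(2) by auto
  have "card {x, y, pxor x y} \<le> 3" using card_length[of "[x, y, pxor x y]"] by simp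
  then obtain z where z: "z \<in> K" "z \<notin> {x, y, pxor x y}"
    using exists_outside[of "{x, y, pxor x y}" K] assms(2) by auto
  have "bdet x y z" using x y z assms(1) by (intro bdet_if_not_in_span) blast+
  moreover have "distinct [x, y, z]" using y z by auto
  ultimately have "parity_basis {x, y, z}"
    unfolding parity_basis_def by (intro exI[of _ x] exI[of _ y] exI[of _ z]) simp
  moreover have "{x, y, z} \<subseteq> K" using x y z by simp
  ultimately show ?thesis by (intro exI[of _ "{x, y, z}"]) simp
qed

lemma two_bases_in_six:
  assumes "pzero \<notin> K" "card K = 6"
  shows "\<exists>T1 T2. T1 \<subseteq> K \<and> T2 \<subseteq> K \<and> T1 \<inter> T2 = {} \<and> parity_basis T1 \<and> parity_basis T2"
proof -
  have card7: "card (UNIV - {pzero}) = 7" by (simp add: card_Diff_singleton card_parity)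
  obtain p where p: "p \<noteq> pzero" "p \<notin> K"
    using exists_outside[of K "UNIV - {pzero}"] assms card7 by auto
  have "card (UNIV - {pzero, p}) = 6" using p(1) by (simp add: card_Diff_subset card_parity)
  moreover have "K \<subseteq> UNIV - {pzero, p}" using assms(1) p(2) by blast
  ultimately have K: "K = UNIV - {pzero, p}"
    using assms(2) by (intro card_subset_eq) simp_all
  obtain a where a: "a \<in> K" using exists_outside[of "{}" K] assms(2) by auto
  have "card {a, pxor a p} \<le> 2" using card_length[of "[a, pxor a p]"] by simp
  then obtain b where b: "b \<in> K" "b \<notin> {a, pxor a p}"
    using exists_outside[of "{a, pxor a p}" K] assms(2) by auto
  have ab: "a \<notin> {pzero, p}" "b \<notin> {pzero, p, a, pxor a p}" using a b assms(1) p(2) by blast+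
  note six = six_split_into_bases[OF p(1) ab]
  show ?thesis
  proof (intro exI conjI)
    show "{a, pxor a p, b} \<subseteq> K" "{pxor b p, pxor a b, pxor (pxor a b) p} \<subseteq> K"
      using six(2) unfolding K by (simp_all only: set_simps) blast+
    show "{a, pxor a p, b} \<inter> {pxor b p, pxor a b, pxor (pxor a b) p} = {}"
      using six(1) by simp
    show "parity_basis {a, pxor a p, b}"
      unfolding parity_basis_def using six(1,3)
      by (intro exI[of _ a] exI[of _ "pxor a p"] exI[of _ b]) simp
    show "parity_basis {pxor b p, pxor a b, pxor (pxor a b) p}"
      unfolding parity_basis_def using six(1,4)
      by (intro exI[of _ "pxor b p"] exI[of _ "pxor a b"] exI[of _ "pxor (pxor a b) p"]) simp
  qed
qed

lemma sign_square: "e \<in> {1, -1} \<Longrightarrow> e * e = (1::real)"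
  by auto

lemma square_eq_4: "(x::real)^2 = 4 \<Longrightarrow> x = 2 \<or> x = -2"
  using power2_eq_iff[of x 2] by simp

definition int_det3 :: "int \<Rightarrow> int \<Rightarrow> int \<Rightarrow> int \<Rightarrow> int \<Rightarrow> int \<Rightarrow> int \<Rightarrow> int \<Rightarrow> int \<Rightarrow> int" where
  "int_det3 a1 a2 a3 b1 b2 b3 c1 c2 c3 =
     a1 * (b2 * c3 - b3 * c2) - a2 * (b1 * c3 - b3 * c1) + a3 * (b1 * c2 - b2 * c1)"

lemma odd_int_det3:
  "odd (int_det3 a1 a2 a3 b1 b2 b3 c1 c2 c3) \<longleftrightarrow>
     bdet (odd a1, odd a2, odd a3) (odd b1, odd b2, odd b3) (odd c1, odd c2, odd c3)"
  unfolding int_det3_def by auto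

locale min_norm_lattice =
  fixes b1 b2 b3 :: "real^3" and L :: "(real^3) set"
  assumes basis_det: "det3 b1 b2 b3 \<noteq> 0"
    and L_eq: "L = {of_int i *\<^sub>R b1 + of_int j *\<^sub>R b2 + of_int k *\<^sub>R b3 | i j k. True}"
    and min_norm: "\<forall>v\<in>L. v \<noteq> 0 \<longrightarrow> norm v \<ge> 2"
begin

definition pt :: "int \<Rightarrow> int \<Rightarrow> int \<Rightarrow> real^3" where
  "pt i j k = of_int i *\<^sub>R b1 + of_int j *\<^sub>R b2 + of_int k *\<^sub>R b3"

definition coord1 :: "real^3 \<Rightarrow> int" where "coord1 v = \<lfloor>det3 v b2 b3 / det3 b1 b2 b3\<rfloor>"
definition coord2 :: "real^3 \<Rightarrow> int" where "coord2 v = \<lfloor>det3 b1 v b3 / det3 b1 b2 b3\<rfloor>"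
definition coord3 :: "real^3 \<Rightarrow> int" where "coord3 v = \<lfloor>det3 b1 b2 v / det3 b1 b2 b3\<rfloor>"

lemma coord_pt [simp]: "coord1 (pt i j k) = i" "coord2 (pt i j k) = j" "coord3 (pt i j k) = k"
  unfolding coord1_def coord2_def coord3_def pt_def using basis_det
  by (simp_all add: det3_linear det3_alternating(1-3))

lemma L_range: "L = range (\<lambda>(i, j, k). pt i j k)"
proof (intro set_eqI iffI)
  fix x assume "x \<in> L"
  then obtain i j k where "x = pt i j k" unfolding L_eq pt_def by auto
  then show "x \<in> range (\<lambda>(i, j, k). pt i j k)" by (auto intro: rev_image_eqI[of "(i, j, k)"])
qed (auto simp: L_eq pt_def)

lemma pt_in_L [simp]: "pt i j k \<in> L"
  unfolding L_range by (auto intro: rev_image_eqI[of "(i, j, k)"])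

lemma pt_coords: "v \<in> L \<Longrightarrow> v = pt (coord1 v) (coord2 v) (coord3 v)"
  unfolding L_range by auto

lemma pt_add: "pt i j k + pt i' j' k' = pt (i + i') (j + j') (k + k')"
  and pt_diff: "pt i j k - pt i' j' k' = pt (i - i') (j - j') (k - k')"
  and pt_scale: "of_int m *\<^sub>R pt i j k = pt (m * i) (m * j) (m * k)"
  unfolding pt_def by (simp_all add: algebra_simps)

lemma L_add: "v \<in> L \<Longrightarrow> w \<in> L \<Longrightarrow> v + w \<in> L"
  and coord_add: "v \<in> L \<Longrightarrow> w \<in> L \<Longrightarrow>
    coord1 (v + w) = coord1 v + coord1 w \<and> coord2 (v + w) = coord2 v + coord2 w
    \<and> coord3 (v + w) = coord3 v + coord3 w"
  using pt_add[of "coord1 v" "coord2 v" "coord3 v" "coord1 w" "coord2 w" "coord3 w"]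
  by (simp_all flip: pt_coords)

lemma L_diff: "v \<in> L \<Longrightarrow> w \<in> L \<Longrightarrow> v - w \<in> L"
  and coord_diff: "v \<in> L \<Longrightarrow> w \<in> L \<Longrightarrow>
    coord1 (v - w) = coord1 v - coord1 w \<and> coord2 (v - w) = coord2 v - coord2 w
    \<and> coord3 (v - w) = coord3 v - coord3 w"
  using pt_diff[of "coord1 v" "coord2 v" "coord3 v" "coord1 w" "coord2 w" "coord3 w"]
  by (simp_all flip: pt_coords)

text \<open>The class of a lattice vector in \<open>L / 2L \<cong> F\<^sub>2\<^sup>3\<close>.\<close>
definition par :: "real^3 \<Rightarrow> parity" where
  "par v = (odd (coord1 v), odd (coord2 v), odd (coord3 v))"

lemma par_add: "v \<in> L \<Longrightarrow> w \<in> L \<Longrightarrow> par (v + w) = pxor (par v) (par w)"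
  and par_diff: "v \<in> L \<Longrightarrow> w \<in> L \<Longrightarrow> par (v - w) = pxor (par v) (par w)"
  unfolding par_def by (simp_all add: coord_add coord_diff)

lemma par_neg: "v \<in> L \<Longrightarrow> par (- v) = par v"
proof -
  assume v: "v \<in> L"
  have "pt 0 0 0 = 0" by (simp add: pt_def)
  then have "0 \<in> L" "par 0 = pzero" using pt_in_L[of 0 0 0] coord_pt[of 0 0 0] by (simp_all add: par_def)
  then show ?thesis using par_diff[OF _ v, of 0] by (metis pxor_ac(2) pxor_zero diff_0)
qed

text \<open>A vector of \<open>2L\<close> shorter than 4 is zero, since half of it is a lattice vector
  shorter than the minimum 2.\<close>
lemma even_short_zero:
  assumes "x \<in> L" "par x = pzero" "(norm x)^2 < 16"
  shows "x = 0"
proof -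
  obtain i j k where ijk: "coord1 x = 2 * i" "coord2 x = 2 * j" "coord3 x = 2 * k"
    using assms(2) unfolding par_def by (auto elim!: evenE)
  have x: "x = 2 *\<^sub>R pt i j k" using pt_coords[OF assms(1)] ijk pt_scale[of 2 i j k] by simp
  then have "(norm (pt i j k))^2 < 2^2" using assms(3) by (simp add: power2_eq_square)
  then have "norm (pt i j k) < 2" by (rule power2_less_imp_less) simp
  then have "pt i j k = 0" using min_norm pt_in_L by force
  then show ?thesis using x by simp
qed

definition minvecs :: "(real^3) set" where "minvecs = {v\<in>L. norm v = 2}"

lemma minvecs_L: "v \<in> minvecs \<Longrightarrow> v \<in> L"
  and minvecs_norm: "v \<in> minvecs \<Longrightarrow> norm v = 2"
  unfolding minvecs_def by auto

text \<open>Two minimal vectors in the same class agree up to sign: \<open>|v + w|\<^sup>2 + |v - w|\<^sup>2 = 16\<close>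
  and both \<open>v + w, v - w \<in> 2L\<close>.\<close>
lemma same_par_minvecs:
  assumes "v \<in> minvecs" "w \<in> minvecs" "par v = par w"
  shows "w = v \<or> w = - v"
proof -
  have L: "v \<in> L" "w \<in> L" and n: "norm v = 2" "norm w = 2"
    using assms by (auto simp: minvecs_L minvecs_norm)
  have "(norm (v + w))^2 + (norm (v - w))^2 = 2 * ((norm v)^2 + (norm w)^2)"
    unfolding power2_norm_eq_inner by (simp add: inner_add_left inner_add_right inner_diff_left
        inner_diff_right inner_commute algebra_simps)
  then have "(norm (v + w))^2 < 16 \<or> (norm (v - w))^2 < 16" using n by auto
  moreover have "par (v + w) = pzero" "par (v - w) = pzero" using L assms(3) by (simp_all add: par_add par_diff)
  ultimately have "v + w = 0 \<or> v - w = 0" using L even_short_zero L_add L_diff by blast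
  then show ?thesis by (auto simp: add_eq_0_iff)
qed

text \<open>If the class of \<open>v3\<close> is the sum of the classes of \<open>v1, v2\<close>, then \<open>v3 = \<pm>v1 \<pm> v2\<close>:
  the four vectors \<open>v3 \<pm> v1 \<pm> v2\<close> lie in \<open>2L\<close> and their squared norms sum to 48.\<close>
lemma xor_par_minvecs:
  assumes "v1 \<in> minvecs" "v2 \<in> minvecs" "v3 \<in> minvecs" "par v3 = pxor (par v1) (par v2)"
  shows "\<exists>e1 e2 :: real. e1 \<in> {1, -1} \<and> e2 \<in> {1, -1} \<and> v3 = e1 *\<^sub>R v1 + e2 *\<^sub>R v2"
proof -
  have L: "v1 \<in> L" "v2 \<in> L" "v3 \<in> L" and n: "norm v1 = 2" "norm v2 = 2" "norm v3 = 2"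
    using assms by (auto simp: minvecs_L minvecs_norm)
  define a where "a = v3 - v1 - v2"
  define b where "b = v3 - v1 + v2"
  define c where "c = v3 + v1 - v2"
  define d where "d = v3 + v1 + v2"
  have zero: "u = 0" if "u \<in> {a, b, c, d}" "(norm u)^2 < 16" for u
  proof (rule even_short_zero)
    show "u \<in> L" using that L unfolding a_def b_def c_def d_def by (auto simp: L_add L_diff)
    show "par u = pzero" using that L unfolding a_def b_def c_def d_def
      by (auto simp: L_add L_diff par_add par_diff assms(4) pxor_ac)
  qed (use that in simp)
  have "(norm a)^2 + (norm b)^2 + (norm c)^2 + (norm d)^2
        = 4 * ((norm v1)^2 + (norm v2)^2 + (norm v3)^2)"
    unfolding a_def b_def c_def d_def power2_norm_eq_inner
    by (simp add: inner_add_left inner_add_right inner_diff_left inner_diff_right inner_commute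
        algebra_simps)
  then have "(norm a)^2 + (norm b)^2 + (norm c)^2 + (norm d)^2 = 48" using n by simp
  then have "(norm a)^2 < 16 \<or> (norm b)^2 < 16 \<or> (norm c)^2 < 16 \<or> (norm d)^2 < 16"
    by linarith
  then have "a = 0 \<or> b = 0 \<or> c = 0 \<or> d = 0" using zero by blast
  moreover have decomp: "v3 = a + v1 + v2" "v3 = b + v1 - v2" "v3 = c - v1 + v2" "v3 = d - v1 - v2"
    unfolding a_def b_def c_def d_def by simp_all
  ultimately consider "v3 = 1 *\<^sub>R v1 + 1 *\<^sub>R v2" | "v3 = 1 *\<^sub>R v1 + (-1) *\<^sub>R v2"
    | "v3 = (-1) *\<^sub>R v1 + 1 *\<^sub>R v2" | "v3 = (-1) *\<^sub>R v1 + (-1) *\<^sub>R v2"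
    by (elim disjE) simp_all
  then show ?thesis by cases blast+
qed

lemma xor_par_inner:
  assumes "v1 \<in> minvecs" "v2 \<in> minvecs" "v3 \<in> minvecs" "par v3 = pxor (par v1) (par v2)"
  shows "(inner v1 v2)^2 = 4"
proof -
  obtain e1 e2 :: real where e: "e1 \<in> {1, -1}" "e2 \<in> {1, -1}" "v3 = e1 *\<^sub>R v1 + e2 *\<^sub>R v2"
    using xor_par_minvecs[OF assms] by blast
  have "(norm v3)^2 = (e1 * e1) * (norm v1)^2 + (e2 * e2) * (norm v2)^2 + 2 * (e1 * e2 * inner v1 v2)"
    unfolding e(3) power2_norm_eq_inner
    by (simp add: inner_add_left inner_add_right inner_commute algebra_simps)
  then have "e1 * e2 * inner v1 v2 = -2"
    using assms(1-3) sign_square[OF e(1)] sign_square[OF e(2)] by (simp add: minvecs_norm)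
  then have "(e1 * e2 * inner v1 v2)^2 = 4" by simp
  moreover have "(e1 * e2 * inner v1 v2)^2 = (e1 * e1) * (e2 * e2) * (inner v1 v2)^2"
    by (simp add: power2_eq_square algebra_simps)
  ultimately show ?thesis using sign_square[OF e(1)] sign_square[OF e(2)] by simp
qed

text \<open>Otherwise pick
  minimal \<open>va, vb, vc\<close> in the classes of a basis; the minimal vector in the class of their
  sum is \<open>\<pm>va \<pm> vb \<pm> vc\<close>, and its squared norm \<open>4 = 12 + 2 (\<pm>2 \<pm>2 \<pm>2)\<close> is impossible.\<close>
lemma not_all_classes_minimal: "\<not> (\<forall>c. c \<noteq> pzero \<longrightarrow> (\<exists>v\<in>minvecs. par v = c))"
proof
  assume all: "\<forall>c. c \<noteq> pzero \<longrightarrow> (\<exists>v\<in>minvecs. par v = c)"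
  obtain va where va: "va \<in> minvecs" "par va = (True, False, False)" using all by blast
  obtain vb where vb: "vb \<in> minvecs" "par vb = (False, True, False)" using all by blast
  obtain vc where vc: "vc \<in> minvecs" "par vc = (False, False, True)" using all by blast
  obtain vab where vab: "vab \<in> minvecs" "par vab = (True, True, False)" using all by blast
  obtain vac where vac: "vac \<in> minvecs" "par vac = (True, False, True)" using all by blast
  obtain vbc where vbc: "vbc \<in> minvecs" "par vbc = (False, True, True)" using all by blast
  obtain vabc where vabc: "vabc \<in> minvecs" "par vabc = (True, True, True)" using all by blast
  have ab: "(inner va vb)^2 = 4" by (rule xor_par_inner[OF va(1) vb(1) vab(1)]) (simp add: va vb vab)
  have ac: "(inner va vc)^2 = 4" by (rule xor_par_inner[OF va(1) vc(1) vac(1)]) (simp add: va vc vac)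
  have bc: "(inner vb vc)^2 = 4" by (rule xor_par_inner[OF vb(1) vc(1) vbc(1)]) (simp add: vb vc vbc)
  obtain e1 e2 :: real where e: "e1 \<in> {1, -1}" "e2 \<in> {1, -1}" "vab = e1 *\<^sub>R va + e2 *\<^sub>R vb"
    using xor_par_minvecs[OF va(1) vb(1) vab(1)] by (auto simp: va vb vab)
  obtain f1 f2 :: real where f: "f1 \<in> {1, -1}" "f2 \<in> {1, -1}" "vabc = f1 *\<^sub>R vab + f2 *\<^sub>R vc"
    using xor_par_minvecs[OF vab(1) vc(1) vabc(1)] by (auto simp: vc vab vabc)
  define d1 d2 d3 where "d1 = f1 * e1" and "d2 = f1 * e2" and "d3 = f2"
  have d: "d1 * d1 = 1" "d2 * d2 = 1" "d3 * d3 = 1"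
    unfolding d1_def d2_def d3_def using e f by auto
  have "vabc = d1 *\<^sub>R va + d2 *\<^sub>R vb + d3 *\<^sub>R vc"
    unfolding d1_def d2_def d3_def f(3) e(3) by (simp add: algebra_simps)
  then have "(norm vabc)^2 = (d1 * d1) * (norm va)^2 + (d2 * d2) * (norm vb)^2 + (d3 * d3) * (norm vc)^2
      + 2 * ((d1 * d2) * inner va vb + (d1 * d3) * inner va vc + (d2 * d3) * inner vb vc)"
    unfolding power2_norm_eq_inner by (simp add: inner_add_left inner_add_right inner_commute algebra_simps)
  then have sum: "(d1 * d2) * inner va vb + (d1 * d3) * inner va vc + (d2 * d3) * inner vb vc = -4"
    using d va(1) vb(1) vc(1) vabc(1) by (simp add: minvecs_norm)
  have "((d1 * d2) * inner va vb)^2 = 4" "((d1 * d3) * inner va vc)^2 = 4"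
    "((d2 * d3) * inner vb vc)^2 = 4"
    using ab ac bc d by (simp_all add: power_mult_distrib power2_eq_square algebra_simps)
  then show False using sum by (auto dest!: square_eq_4)
qed

text \<open>Lattice vectors whose classes form a basis of \<open>F\<^sub>2\<^sup>3\<close> are linearly independent: their
  integer determinant is odd.\<close>
lemma det3_cf_int: "det3 (pt a1 a2 a3) (pt c1 c2 c3) (pt e1 e2 e3)
    = of_int (int_det3 a1 a2 a3 c1 c2 c3 e1 e2 e3) * det3 b1 b2 b3"
  unfolding pt_def
  by (simp add: det3_linear det3_alternating(1-3) det3_alternating(4-8)[where a = b1 and b = b2 and c = b3] int_det3_def
      algebra_simps)

lemma det3_nonzero_of_bdet:
  assumes "v1 \<in> L" "v2 \<in> L" "v3 \<in> L" "bdet (par v1) (par v2) (par v3)"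
  shows "det3 v1 v2 v3 \<noteq> 0"
proof -
  let ?z = "int_det3 (coord1 v1) (coord2 v1) (coord3 v1) (coord1 v2) (coord2 v2) (coord3 v2)
              (coord1 v3) (coord2 v3) (coord3 v3)"
  have "det3 v1 v2 v3 = of_int ?z * det3 b1 b2 b3"
    using det3_cf_int pt_coords assms(1-3) by metis
  moreover have "odd ?z" using assms(4) unfolding odd_int_det3 par_def .
  then have "?z \<noteq> 0" by auto
  ultimately show ?thesis using basis_det by simp
qed

definition classes :: "parity set" where "classes = par ` minvecs"

definition rep :: "parity \<Rightarrow> real^3" where "rep c = (SOME v. v \<in> minvecs \<and> par v = c)"

definition dirs :: "(real^3) set" where "dirs = rep ` classes"

lemma rep_in: "c \<in> classes \<Longrightarrow> rep c \<in> minvecs \<and> par (rep c) = c"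
  unfolding classes_def rep_def by (rule someI_ex) auto

lemma pzero_notin_classes: "pzero \<notin> classes"
proof
  assume "pzero \<in> classes"
  then obtain v where v: "v \<in> minvecs" "par v = pzero" unfolding classes_def by auto
  then have "v = 0" using even_short_zero by (simp add: minvecs_L minvecs_norm)
  then show False using minvecs_norm[OF v(1)] by simp
qed

lemma inj_rep: "inj_on rep classes"
  by (rule inj_onI) (metis rep_in)

text \<open>At most six classes contain minimal vectors (\<open>not_all_classes_minimal\<close>).\<close>
lemma card_classes_le6: "card classes \<le> 6"
proof -
  have sub: "classes \<subseteq> UNIV - {pzero}" using pzero_notin_classes by auto
  have card7: "card (UNIV - {pzero}) = 7" by (simp add: card_Diff_singleton card_parity)
  have "classes \<noteq> UNIV - {pzero}"
  proof
    assume eq: "classes = UNIV - {pzero}"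
    have "\<forall>c. c \<noteq> pzero \<longrightarrow> (\<exists>v\<in>minvecs. par v = c)"
    proof (intro allI impI)
      fix c :: parity assume "c \<noteq> pzero"
      then have "c \<in> par ` minvecs" using eq unfolding classes_def by simp
      then show "\<exists>v\<in>minvecs. par v = c" by (auto simp: eq_commute)
    qed
    then show False using not_all_classes_minimal by simp
  qed
  then have "card classes \<noteq> 7"
    using card_seteq[of "UNIV - {pzero}" classes] sub card7 by auto
  moreover have "card classes \<le> 7" using card_mono[OF _ sub] card7 by simp
  ultimately show ?thesis by simp
qed

text \<open>The directions satisfy the hypotheses of \<open>contact_number_by_directions\<close>: every contact
  vector is \<open>\<pm>\<close> a direction (\<open>same_par_minvecs\<close>), and no direction is the negative of another.\<close>
lemma dirs_cover:
  assumes "x \<in> L" "y \<in> L" "dist x y = 2"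
  shows "y - x \<in> dirs \<or> x - y \<in> dirs"
proof -
  have d: "y - x \<in> minvecs"
    unfolding minvecs_def using assms L_diff by (simp add: dist_norm norm_minus_commute)
  then have c: "par (y - x) \<in> classes" unfolding classes_def by simp
  then have "rep (par (y - x)) = y - x \<or> rep (par (y - x)) = - (y - x)"
    using same_par_minvecs[OF d] rep_in by metis
  then show ?thesis unfolding dirs_def using c by (metis image_eqI minus_diff_eq)
qed

lemma dirs_antipodal_free: "s \<in> dirs \<Longrightarrow> - s \<notin> dirs"
proof
  assume s: "s \<in> dirs" and ns: "- s \<in> dirs"
  obtain c where c: "c \<in> classes" "s = rep c" using s unfolding dirs_def by auto
  obtain c' where c': "c' \<in> classes" "- s = rep c'" using ns unfolding dirs_def by auto
  have sM: "s \<in> minvecs" using rep_in[OF c(1)] c(2) by simp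
  have "c' = c" using rep_in c c' par_neg[OF minvecs_L[OF sM]] by metis
  then have "s + s = 0" using c c' by (metis add.right_inverse)
  then have "s = 0" by (simp flip: scaleR_2)
  then show False using minvecs_norm[OF sM] by simp
qed

lemma dirs_norm: "s \<in> dirs \<Longrightarrow> norm s = 2"
  unfolding dirs_def using rep_in minvecs_norm by auto

lemma contact_number_eq:
  assumes "finite P" "P \<subseteq> L"
  shows "real (contact_number P) = real (card classes) * real (card P) - (\<Sum>s\<in>dirs. real (ends P s))"
proof -
  have "contact_number P = (\<Sum>s\<in>dirs. card {x\<in>P. x + s \<in> P})"
    by (rule contact_number_by_directions[OF assms(1)])
       (use dirs_cover assms(2) dirs_antipodal_free dirs_norm in \<open>auto simp: dirs_def\<close>)
  moreover have "real (card {x\<in>P. x + s \<in> P}) = real (card P) - real (ends P s)" for s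
    using card_shift_in_plus_ends[OF assms(1), of s] by (simp flip: of_nat_add)
  ultimately have "real (contact_number P) = (\<Sum>s\<in>dirs. real (card P) - real (ends P s))"
    by simp
  also have "\<dots> = real (card dirs) * real (card P) - (\<Sum>s\<in>dirs. real (ends P s))"
    by (simp add: sum_subtractf)
  finally show ?thesis unfolding dirs_def card_image[OF inj_rep] .
qed

lemma ends_basis_bound:
  assumes "finite P" "P \<noteq> {}" "T \<subseteq> classes" "parity_basis T"
  shows "3 * real (card P) powr (2/3) \<le> (\<Sum>c\<in>T. real (ends P (rep c)))"
proof -
  obtain x y z where T: "T = {x, y, z}" "distinct [x, y, z]" "bdet x y z"
    using assms(4) unfolding parity_basis_def by blast
  have xyz: "rep x \<in> minvecs \<and> par (rep x) = x" "rep y \<in> minvecs \<and> par (rep y) = y"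
    "rep z \<in> minvecs \<and> par (rep z) = z" using rep_in assms(3) T(1) by auto
  have "det3 (rep x) (rep y) (rep z) \<noteq> 0"
    using xyz T(3) by (intro det3_nonzero_of_bdet) (simp_all add: minvecs_L)
  then have "3 * real (card P) powr (2/3)
      \<le> real (ends P (rep x)) + real (ends P (rep y)) + real (ends P (rep z))"
    by (rule ends_sum_bound[OF assms(1,2)])
  then show ?thesis using T(1,2) by simp
qed

lemma sum_ends_le:
  assumes "A \<subseteq> classes"
  shows "(\<Sum>c\<in>A. real (ends P (rep c))) \<le> (\<Sum>s\<in>dirs. real (ends P s))"
proof -
  have "(\<Sum>c\<in>A. real (ends P (rep c))) = (\<Sum>s\<in>rep ` A. real (ends P s))"
    by (simp add: sum.reindex[OF inj_on_subset[OF inj_rep assms]])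
  also have "\<dots> \<le> (\<Sum>s\<in>dirs. real (ends P s))"
    using assms by (intro sum_mono2) (auto simp: dirs_def)
  finally show ?thesis .
qed

end

text \<open>The constant of the theorem, \<open>\<alpha> = 3 (18\<pi>)\<^bsup>1/3\<^esup> / \<pi> \<approx> 3.665\<close>; all we need is
  \<open>\<alpha>\<^sup>3 = 486 / \<pi>\<^sup>2 < 54\<close>.\<close>
definition alpha :: real where "alpha = 3 * (18 * pi) powr (1/3) / pi"

lemma alpha_cube_lt: "alpha^3 < 54"
proof -
  have "alpha^3 = 27 * ((18*pi) powr (1/3))^3 / pi^3" unfolding alpha_def
    by (simp add: power_divide power_mult_distrib)
  also have "((18*pi) powr (1/3))^3 = 18 * pi" using powr_cube[of "18 * pi" "1/3"] by simp
  finally have cube: "alpha^3 = 486 / pi^2" by (simp add: power2_eq_square power3_eq_cube)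
  have "3 * 3 < pi * pi" using pi_gt3 by (intro mult_strict_mono) auto
  then have "pi^2 > 9" by (simp add: power2_eq_square)
  then have "486 / pi^2 < 486 / 9" by (intro divide_strict_left_mono) auto
  then show ?thesis unfolding cube by simp
qed

lemma alpha_lt4: "alpha < 4"
proof -
  have "alpha^3 < 4^3" using alpha_cube_lt by simp
  then show ?thesis by (rule power_less_imp_less_base) simp
qed

lemma bound_three_classes:
  fixes N :: real assumes "N \<ge> 2"
  shows "3 * N < 6 * N - alpha * N powr (2/3)"
proof -
  have N: "N > 0" using assms by simp
  have "alpha^3 < (3 * N powr (1/3))^3"
    using alpha_cube_lt assms powr_cube[OF N, of "1/3"] by (simp add: power_mult_distrib)
  then have "alpha < 3 * N powr (1/3)" by (rule power_less_imp_less_base) simp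
  then have "alpha * N powr (2/3) < 3 * N powr (1/3) * N powr (2/3)"
    using N by (intro mult_strict_right_mono) auto
  also have "\<dots> = 3 * N" using N by (simp add: mult.assoc flip: powr_add)
  finally show ?thesis by simp
qed

lemma bound_five_classes:
  fixes N :: real assumes "N \<ge> 1"
  shows "5 * N - 3 * N powr (2/3) < 6 * N - alpha * N powr (2/3)"
proof -
  have "N powr (2/3) \<le> N powr 1" using assms by (intro powr_mono) auto
  moreover have "alpha * N powr (2/3) < 4 * N powr (2/3)"
    using alpha_lt4 assms by (intro mult_strict_right_mono) auto
  moreover have "N powr 1 = N" using assms by simp
  ultimately show ?thesis by linarith
qed

lemma bound_six_classes:
  fixes N :: real assumes "N > 0"
  shows "6 * N - 6 * N powr (2/3) < 6 * N - alpha * N powr (2/3)"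
  using alpha_lt4 assms by (simp add: mult_strict_right_mono)

context min_norm_lattice
begin

text \<open>The main estimate, by cases on the number \<open>k \<le> 6\<close> of classes containing minimal
  vectors: \<open>k \<le> 3\<close> trivially, \<open>k \<in> {4, 5}\<close> with one basis of classes, \<open>k = 6\<close> with two.\<close>
theorem contact_number_bound:
  assumes fin: "finite P" and PL: "P \<subseteq> L" and n2: "card P \<ge> 2"
  shows "real (contact_number P) < 6 * real (card P) - alpha * real (card P) powr (2/3)"
proof -
  define n k S where "n = card P" and "k = card classes" and "S = (\<Sum>s\<in>dirs. real (ends P s))"
  have C: "real (contact_number P) = real k * real n - S"
    unfolding k_def n_def S_def by (rule contact_number_eq[OF fin PL])
  have ne: "P \<noteq> {}" using n2 by auto
  have basis: "3 * real n powr (2/3) \<le> (\<Sum>c\<in>T. real (ends P (rep c)))"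
    if "T \<subseteq> classes" "parity_basis T" for T
    unfolding n_def using ends_basis_bound[OF fin ne that] .
  consider "k \<le> 3" | "k = 4 \<or> k = 5" | "k = 6" using card_classes_le6 k_def by linarith
  then show ?thesis
  proof cases
    case 1
    then have "real k * real n \<le> 3 * real n" by (intro mult_right_mono) simp_all
    moreover have "S \<ge> 0" unfolding S_def by (rule sum_nonneg) simp
    ultimately have "real (contact_number P) \<le> 3 * real n" using C by linarith
    moreover have "3 * real n < 6 * real n - alpha * real n powr (2/3)"
      by (rule bound_three_classes) (use n2 n_def in simp)
    ultimately show ?thesis unfolding n_def by linarith
  next
    case 2
    then have "card classes \<ge> 4" using k_def by auto
    then obtain T where T: "T \<subseteq> classes" "parity_basis T"
      using basis_in_four[OF pzero_notin_classes] by blast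
    have "3 * real n powr (2/3) \<le> (\<Sum>c\<in>T. real (ends P (rep c)))" by (rule basis[OF T])
    also have "\<dots> \<le> S" unfolding S_def by (rule sum_ends_le[OF T(1)])
    finally have "3 * real n powr (2/3) \<le> S" .
    moreover have "real k * real n \<le> 5 * real n" using 2 by auto
    ultimately have "real (contact_number P) \<le> 5 * real n - 3 * real n powr (2/3)" using C by linarith
    moreover have "5 * real n - 3 * real n powr (2/3) < 6 * real n - alpha * real n powr (2/3)"
      by (rule bound_five_classes) (use n2 n_def in simp)
    ultimately show ?thesis unfolding n_def by linarith
  next
    case 3
    then have "card classes = 6" using k_def by simp
    from two_bases_in_six[OF pzero_notin_classes this]
    obtain T1 T2 where T: "T1 \<subseteq> classes" "T2 \<subseteq> classes" "T1 \<inter> T2 = {}"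
      "parity_basis T1" "parity_basis T2"
      by blast
    have "(\<Sum>c\<in>T1 \<union> T2. real (ends P (rep c)))
          = (\<Sum>c\<in>T1. real (ends P (rep c))) + (\<Sum>c\<in>T2. real (ends P (rep c)))"
      by (rule sum.union_disjoint) (simp_all add: T(3))
    then have "6 * real n powr (2/3) \<le> (\<Sum>c\<in>T1 \<union> T2. real (ends P (rep c)))"
      using basis[OF T(1,4)] basis[OF T(2,5)] by linarith
    also have "\<dots> \<le> S" unfolding S_def using T(1,2) by (intro sum_ends_le) simp
    finally have "real (contact_number P) \<le> 6 * real n - 6 * real n powr (2/3)" using C 3 by simp
    moreover have "6 * real n - 6 * real n powr (2/3) < 6 * real n - alpha * real n powr (2/3)"
      by (rule bound_six_classes) (use n2 n_def in simp)
    ultimately show ?thesis unfolding n_def by linarith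
  qed
qed

lemma collinear_packing:
  assumes "v \<in> L" "norm v = 2"
  shows "\<exists>P. P \<subseteq> L \<and> unit_ball_packing P \<and> card P = n"
proof -
  define P where "P = (\<lambda>i::nat. real i *\<^sub>R v) ` {..<n}"
  have v0: "v \<noteq> 0" using assms(2) by auto
  have "card P = n" unfolding P_def using v0 by (subst card_image) (auto simp: inj_on_def)
  moreover have "P \<subseteq> L"
  proof
    fix x assume "x \<in> P"
    then obtain i :: nat where "x = real i *\<^sub>R v" unfolding P_def by auto
    then have "x = of_int (int i) *\<^sub>R pt (coord1 v) (coord2 v) (coord3 v)"
      using pt_coords[OF assms(1)] by simp
    then show "x \<in> L" by (simp only: pt_scale pt_in_L)
  qed
  moreover have "dist (real i *\<^sub>R v) (real j *\<^sub>R v) \<ge> 2" if "i \<noteq> j" for i j :: nat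
  proof -
    have "dist (real i *\<^sub>R v) (real j *\<^sub>R v) = \<bar>real i - real j\<bar> * norm v"
      unfolding dist_norm by (simp flip: scaleR_diff_left)
    moreover have "\<bar>real i - real j\<bar> \<ge> 1" using that by linarith
    ultimately show ?thesis using assms(2) by simp
  qed
  then have "unit_ball_packing P" unfolding unit_ball_packing_def P_def by auto
  ultimately show ?thesis by blast
qed

end

text \<open>A strict bound on all contact numbers of \<open>n\<close>-point lattice packings bounds their
  maximum, provided such packings exist (the set of contact numbers is then finite).\<close>
lemma lattice_contact_max_less:
  assumes bound: "\<And>P. P \<subseteq> L \<Longrightarrow> unit_ball_packing P \<Longrightarrow> card P = n \<Longrightarrow> real (contact_number P) < B"
    and ex: "\<exists>P. P \<subseteq> L \<and> unit_ball_packing P \<and> card P = n"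
  shows "real (lattice_contact_max L n) < B"
proof -
  define C where "C = {contact_number P | P. P \<subseteq> L \<and> unit_ball_packing P \<and> card P = n}"
  have less: "real c < B" if "c \<in> C" for c using that bound unfolding C_def by blast
  have "C \<subseteq> {..nat \<lceil>B\<rceil>}"
  proof
    fix c assume "c \<in> C"
    then have "real c \<le> of_int \<lceil>B\<rceil>" using less le_of_int_ceiling[of B] by (meson less_imp_le order_trans)
    then show "c \<in> {..nat \<lceil>B\<rceil>}" by (simp add: le_nat_iff)
  qed
  then have "finite C" by (rule finite_subset) simp
  moreover have "C \<noteq> {}" unfolding C_def using ex by blast
  ultimately have "Max C \<in> C" by simp
  moreover have "lattice_contact_max L n = Max C" unfolding lattice_contact_max_def C_def ..
  ultimately show ?thesis using less by simp
qed

lemma lattice3_min_norm_lattice: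
  assumes "lattice3 L" "\<forall>v\<in>L. v \<noteq> 0 \<longrightarrow> norm v \<ge> 2"
  obtains b1 b2 b3 where "min_norm_lattice b1 b2 b3 L"
proof -
  obtain b1 b2 b3 where b: "card {b1, b2, b3} = 3" "independent {b1, b2, b3}"
    "L = {of_int i *\<^sub>R b1 + of_int j *\<^sub>R b2 + of_int k *\<^sub>R b3 | i j k. True}"
    using assms(1) unfolding lattice3_def by blast
  have "min_norm_lattice b1 b2 b3 L"
    using det3_nonzero_if_independent[OF b(2,1)] b(3) assms(2) by unfold_locales
  then show ?thesis by (rule that)
qed

theorem theorem1:
  fixes L :: "(real^3) set" and n :: nat
  assumes "lattice3 L"
    and "\<forall>v\<in>L. v \<noteq> 0 \<longrightarrow> norm v \<ge> 2"
    and "\<exists>v\<in>L. v \<noteq> 0 \<and> norm v = 2"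
    and "n \<ge> 2"
  shows "real (lattice_contact_max L n)
           < 6 * real n - 3 * (18 * pi) powr (1/3) / pi * real n powr (2/3)"
proof -
  obtain b1 b2 b3 where "min_norm_lattice b1 b2 b3 L"
    using lattice3_min_norm_lattice[OF assms(1,2)] .
  then interpret min_norm_lattice b1 b2 b3 L .
  obtain v where "v \<in> L" "norm v = 2" using assms(3) by blast
  have "real (lattice_contact_max L n) < 6 * real n - alpha * real n powr (2/3)"
  proof (rule lattice_contact_max_less)
    fix P assume "P \<subseteq> L" "unit_ball_packing P" "card P = n"
    then show "real (contact_number P) < 6 * real n - alpha * real n powr (2/3)"
      using contact_number_bound[of P] assms(4) by (simp add: unit_ball_packing_def)
  qed (rule collinear_packing[OF \<open>v \<in> L\<close> \<open>norm v = 2\<close>])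
  then show ?thesis unfolding alpha_def .
qed

end
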